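(* Let $n\le m$ and let $\mathcal C$ be an $(n,n-\rho)$ linear code over $\mathrm{GF}(q^m)$ with minimum rank distance $\rho+1$ (an MRD code) and rank covering radius $\rho$. Let $\bar f:\mathrm{GF}(q^m)^n\to\mathrm{GF}(q^{m+\rho})^n$ be the map defined below. Then $\bar f(\mathcal C)$ is a code of length $n$ over $\mathrm{GF}(q^{m+\rho})$ with cardinality $q^{m(n-\rho)}$ and rank covering radius $\rho$.
   Context: The rank $\mathrm{rk}(\mathbf x)$ of a vector over $\mathrm{GF}(q^N)$ is the maximum number of its coordinates linearly independent over $\mathrm{GF}(q)$; $d_{\mathrm R}(\mathbf x,\mathbf y)=\mathrm{rk}(\mathbf x-\mathbf y)$; the rank covering radius of a code $C\subseteq\mathrm{GF}(q^N)^n$ is $\max_{\mathbf x}\min_{\mathbf c\in C}d_{\mathrm R}(\mathbf x,\mathbf c)$. Let $\alpha_0,\dots,\alpha_{m+\rho-1}$ be a basis of $\mathrm{GF}(q^{m+\rho})$ over $\mathrm{GF}(q)$ and $\beta_0,\dots,\beta_{m-1}$ a basis of $\mathrm{GF}(q^m)$ over $\mathrm{GF}(q)$. Let $f:\mathrm{GF}(q^m)\to\mathrm{GF}(q^{m+\rho})$ be the $\mathrm{GF}(q)$-linear map with $f(\beta_i)=\alpha_i$ for $0\le i\le m-1$, and let $\bar f(v_0,\dots,v_{n-1})=(f(v_0),\dots,f(v_{n-1}))$. *)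

theory Defs
  imports "HOL-Analysis.Analysis"
begin

text \<open>The ground field GF(q) is a finite field type 'k; an extension field
  (type 'b or 'c) is viewed as a GF(q)-vector space through a field embedding
  iota :: 'k => 'b.\<close>

definition field_emb :: "('k::field \<Rightarrow> 'b::field) \<Rightarrow> bool" where
  "field_emb \<iota> \<longleftrightarrow> \<iota> 1 = 1 \<and> (\<forall>a b. \<iota> (a + b) = \<iota> a + \<iota> b) \<and> (\<forall>a b. \<iota> (a * b) = \<iota> a * \<iota> b)"

definition lin_indep_over :: "('k::field \<Rightarrow> 'b::field) \<Rightarrow> ('i \<Rightarrow> 'b) \<Rightarrow> 'i set \<Rightarrow> bool" where
  "lin_indep_over \<iota> v S \<longleftrightarrow>
     (\<forall>c :: 'i \<Rightarrow> 'k. (\<Sum>i\<in>S. \<iota> (c i) * v i) = 0 \<longrightarrow> (\<forall>i\<in>S. c i = 0))"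

definition is_basis_over :: "('k::field \<Rightarrow> 'b::field) \<Rightarrow> (nat \<Rightarrow> 'b) \<Rightarrow> nat \<Rightarrow> bool" where
  "is_basis_over \<iota> v k \<longleftrightarrow> lin_indep_over \<iota> v {..<k} \<and>
     (\<forall>y. \<exists>c :: nat \<Rightarrow> 'k. y = (\<Sum>i<k. \<iota> (c i) * v i))"

definition rk :: "('k::field \<Rightarrow> 'b::field) \<Rightarrow> 'b ^ 'n::finite \<Rightarrow> nat" where
  "rk \<iota> x = Max {card S | S. lin_indep_over \<iota> (\<lambda>i. x $ i) S}"

definition rank_dist :: "('k::field \<Rightarrow> 'b::field) \<Rightarrow> 'b ^ 'n::finite \<Rightarrow> 'b ^ 'n \<Rightarrow> nat" where
  "rank_dist \<iota> x y = rk \<iota> (x - y)"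

definition has_min_rank_dist :: "('k::field \<Rightarrow> 'b::field) \<Rightarrow> ('b ^ 'n::finite) set \<Rightarrow> nat \<Rightarrow> bool" where
  "has_min_rank_dist \<iota> C d \<longleftrightarrow>
     (\<exists>x\<in>C. \<exists>y\<in>C. x \<noteq> y \<and> rank_dist \<iota> x y = d) \<and>
     (\<forall>x\<in>C. \<forall>y\<in>C. x \<noteq> y \<longrightarrow> d \<le> rank_dist \<iota> x y)"

definition rank_cov_radius :: "('k::field \<Rightarrow> 'b::{field,finite}) \<Rightarrow> ('b ^ 'n::finite) set \<Rightarrow> nat" where
  "rank_cov_radius \<iota> C = Max (range (\<lambda>x. Min ((\<lambda>c. rank_dist \<iota> x c) ` C)))"

definition fbar :: "('b \<Rightarrow> 'c) \<Rightarrow> 'b ^ 'n \<Rightarrow> 'c ^ 'n" where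
  "fbar f v = (\<chi> i. f (v $ i))"

end

theory Submission
  imports Defs
begin

text \<open>Since f is GF(q)-linear and injective, fbar f preserves ranks. So the lifted code has
  as many words as C, namely q^(m(n - \<rho>)), and at the image of a word realising the
  covering radius of C its covering radius is at least \<rho>.

  Conversely, rk v \<le> \<rho> as soon as the GF(q)-linear map a \<mapsto> \<Sum> a_i v_i on GF(q)^n has a
  kernel of dimension n - \<rho>. Given x over GF(q^(m+\<rho>)), counting the fibres of the map
  (a, y) \<mapsto> \<Sum> a_i x_i + f y shows that the space of all a with \<Sum> a_i x_i \<in> f(GF(q^m)) has
  dimension at least n - \<rho>; pick n - \<rho> independent such a. Because C has minimum distance
  \<rho> + 1 and q^(m(n - \<rho>)) words, the values \<Sum> a_i c_i at these a determine c \<in> C and can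
  be prescribed arbitrarily. Prescribing f^-1(\<Sum> a_i x_i) gives c with rk (x - fbar f c) \<le> \<rho>.\<close>

text \<open>\<open>rk \<iota> v\<close> is \<open>n\<close> minus the dimension of the kernel of the GF(q)-linear map
  \<open>coord_comb \<iota> v\<close>.\<close>

definition coord_comb :: "('k::field \<Rightarrow> 'b::field) \<Rightarrow> 'b ^ 'n::finite \<Rightarrow> 'k ^ 'n \<Rightarrow> 'b" where
  "coord_comb \<iota> v a = (\<Sum>i\<in>UNIV. \<iota> (a $ i) * v $ i)"

lemma field_emb_0: "field_emb \<iota> \<Longrightarrow> \<iota> 0 = 0"
  unfolding field_emb_def by (metis add_cancel_right_right)

lemma field_emb_add: "field_emb \<iota> \<Longrightarrow> \<iota> (a + b) = \<iota> a + \<iota> b"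
  unfolding field_emb_def by blast

lemma field_emb_mult: "field_emb \<iota> \<Longrightarrow> \<iota> (a * b) = \<iota> a * \<iota> b"
  unfolding field_emb_def by blast

lemma additive_coord_comb: "field_emb \<iota> \<Longrightarrow> Modules.additive (coord_comb \<iota> v)"
  by unfold_locales (simp add: coord_comb_def field_emb_add distrib_right sum.distrib)

lemma coord_comb_scale: "field_emb \<iota> \<Longrightarrow> coord_comb \<iota> v (s *s a) = \<iota> s * coord_comb \<iota> v a"
  unfolding coord_comb_def by (simp add: field_emb_mult sum_distrib_left mult.assoc)

lemma coord_comb_diff_vec: "coord_comb \<iota> (v - w) a = coord_comb \<iota> v a - coord_comb \<iota> w a"
  unfolding coord_comb_def by (simp add: right_diff_distrib sum_subtractf)

lemma subspace_coord_comb_preimage: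
  assumes "field_emb \<iota>" and "0 \<in> V" and "\<And>x y. x \<in> V \<Longrightarrow> y \<in> V \<Longrightarrow> x + y \<in> V"
    and "\<And>s x. x \<in> V \<Longrightarrow> \<iota> s * x \<in> V"
  shows "vec.subspace {a. coord_comb \<iota> v a \<in> V}"
proof -
  interpret Modules.additive "coord_comb \<iota> v" by (rule additive_coord_comb[OF assms(1)])
  show ?thesis unfolding vec.subspace_def using assms by (simp add: zero add coord_comb_scale)
qed

lemma lin_indep_over_subset:
  assumes "field_emb \<iota>" and "lin_indep_over \<iota> v T" and "S \<subseteq> T" and "finite T"
  shows "lin_indep_over \<iota> v S"
  unfolding lin_indep_over_def
proof (intro allI impI)
  fix c assume "(\<Sum>i\<in>S. \<iota> (c i) * v i) = 0"
  let ?c = "\<lambda>i. if i \<in> S then c i else 0"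
  have "(\<Sum>i\<in>T. \<iota> (?c i) * v i) = (\<Sum>i\<in>S. \<iota> (?c i) * v i)"
    using assms by (intro sum.mono_neutral_right) (auto simp: field_emb_0)
  with \<open>(\<Sum>i\<in>S. \<iota> (c i) * v i) = 0\<close> have "(\<Sum>i\<in>T. \<iota> (?c i) * v i) = 0"
    by simp
  then have "\<forall>i\<in>T. ?c i = 0"
    using assms(2)[unfolded lin_indep_over_def, THEN spec[of _ ?c]] by blast
  then show "\<forall>i\<in>S. c i = 0"
    using assms(3) by force
qed

lemma rk_leI:
  fixes v :: "'b::field ^ 'n::finite"
  assumes "\<And>S. lin_indep_over \<iota> (\<lambda>i. v $ i) S \<Longrightarrow> card S \<le> r"
  shows "rk \<iota> v \<le> r"
proof -
  have "card S \<le> CARD('n)" for S :: "'n set"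
    by (rule card_mono) auto
  then have "{card S | S. lin_indep_over \<iota> (\<lambda>i. v $ i) S} \<subseteq> {..CARD('n)}"
    by auto
  moreover have "card {} \<in> {card S | S. lin_indep_over \<iota> (\<lambda>i. v $ i) S}"
    unfolding lin_indep_over_def by auto
  ultimately show ?thesis
    unfolding rk_def using assms by (subst Max_le_iff) (auto intro: finite_subset)
qed

lemma one_less_card: "1 < CARD('a::{zero_neq_one,finite})"
proof -
  have "card {0 :: 'a, 1} \<le> CARD('a)" by (rule card_mono) auto
  then show ?thesis by simp
qed

lemma card_range_mult_card_kernel:
  fixes P :: "'a::{ab_group_add,finite} \<Rightarrow> 'b::ab_group_add"
  assumes "Modules.additive P"
  shows "card (range P) * card {x. P x = 0} = CARD('a)"
proof -
  let ?K = "{x. P x = 0}"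
  have "P -` {P x} = (+) x ` ?K" for x
  proof (intro set_eqI iffI)
    fix y assume "y \<in> P -` {P x}"
    then have "y - x \<in> ?K" by (simp add: additive.diff[OF assms])
    then show "y \<in> (+) x ` ?K" by (auto intro: image_eqI[of _ _ "y - x"])
  qed (auto simp: additive.add[OF assms])
  then have fiber: "card (P -` {w}) = card ?K" if "w \<in> range P" for w
    using that by (auto simp: card_image)
  have "(\<Union>w\<in>range P. P -` {w}) = UNIV" by auto
  then have "CARD('a) = card (\<Union>w\<in>range P. P -` {w})" by simp
  also have "\<dots> = (\<Sum>w\<in>range P. card (P -` {w}))"
    by (rule card_UN_disjoint) auto
  also have "\<dots> = card (range P) * card ?K"
    by (simp add: fiber)
  finally show ?thesis ..
qed

lemma card_vec_supported_on:
  "card {a :: 'k::{zero,finite} ^ 'n::finite. \<forall>i. i \<notin> S \<longrightarrow> a $ i = 0} = CARD('k) ^ card S"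
proof -
  let ?E = "{a :: 'k ^ 'n. \<forall>i. i \<notin> S \<longrightarrow> a $ i = 0}"
  have "bij_betw (\<lambda>a. restrict (($) a) S) ?E (S \<rightarrow>\<^sub>E UNIV)"
  proof (rule bij_betw_byWitness[where f' = "\<lambda>g. \<chi> i. if i \<in> S then g i else 0"])
    show "\<forall>a\<in>?E. (\<chi> i. if i \<in> S then restrict (($) a) S i else 0) = a"
      by (simp add: vec_eq_iff)
    show "\<forall>g\<in>S \<rightarrow>\<^sub>E UNIV. restrict (($) (\<chi> i. if i \<in> S then g i else 0)) S = g"
      by (auto simp: PiE_iff extensional_def)
  qed auto
  then show ?thesis
    by (simp add: bij_betw_same_card card_PiE)
qed

lemma inj_on_coord_comb_supported:
  fixes \<iota> :: "'k::field \<Rightarrow> 'b::field" and v :: "'b ^ 'n::finite"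
  assumes emb: "field_emb \<iota>" and indep: "lin_indep_over \<iota> (\<lambda>i. v $ i) S"
  shows "inj_on (coord_comb \<iota> v) {a. \<forall>i. i \<notin> S \<longrightarrow> a $ i = 0}"
proof (rule inj_onI)
  interpret Modules.additive "coord_comb \<iota> v" by (rule additive_coord_comb[OF emb])
  fix a b assume "a \<in> {a. \<forall>i. i \<notin> S \<longrightarrow> a $ i = 0}" "b \<in> {a. \<forall>i. i \<notin> S \<longrightarrow> a $ i = 0}"
    and eq: "coord_comb \<iota> v a = coord_comb \<iota> v b"
  then have supp: "\<forall>i. i \<notin> S \<longrightarrow> (a - b) $ i = 0" by simp
  have "(\<Sum>i\<in>S. \<iota> ((a - b) $ i) * v $ i) = coord_comb \<iota> v (a - b)"
    unfolding coord_comb_def using supp by (intro sum.mono_neutral_left) (auto simp: field_emb_0[OF emb])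
  also have "\<dots> = 0" using eq by (simp add: diff)
  finally have "\<forall>i\<in>S. (a - b) $ i = 0"
    using indep unfolding lin_indep_over_def by blast
  with supp have "a - b = 0" by (simp add: vec_eq_iff) metis
  then show "a = b" by simp
qed

lemma rk_le_of_card_kernel:
  fixes \<iota> :: "'k::{field,finite} \<Rightarrow> 'b::field" and v :: "'b ^ 'n::finite"
  assumes emb: "field_emb \<iota>" and ker: "CARD('k) ^ (CARD('n) - r) \<le> card {a. coord_comb \<iota> v a = 0}"
  shows "rk \<iota> v \<le> r"
proof (rule rk_leI)
  fix S assume indep: "lin_indep_over \<iota> (\<lambda>i. v $ i) S"
  let ?E = "{a :: 'k ^ 'n. \<forall>i. i \<notin> S \<longrightarrow> a $ i = 0}"
  have "CARD('k) ^ card S = card (coord_comb \<iota> v ` ?E)"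
    by (simp add: card_image inj_on_coord_comb_supported[OF emb indep] card_vec_supported_on)
  also have "\<dots> \<le> card (range (coord_comb \<iota> v))"
    by (intro card_mono) auto
  finally have "CARD('k) ^ card S * CARD('k) ^ (CARD('n) - r)
      \<le> card (range (coord_comb \<iota> v)) * card {a. coord_comb \<iota> v a = 0}"
    using ker by (rule mult_le_mono)
  then have "CARD('k) ^ card S * CARD('k) ^ (CARD('n) - r) \<le> CARD('k) ^ CARD('n)"
    by (simp add: card_range_mult_card_kernel[OF additive_coord_comb[OF emb]])
  then have "CARD('k) ^ (card S + (CARD('n) - r)) \<le> CARD('k) ^ CARD('n)"
    by (simp only: power_add)
  then have "card S + (CARD('n) - r) \<le> CARD('n)"
    by (rule power_le_imp_le_exp[OF one_less_card])
  moreover have "card S \<le> CARD('n)" by (rule card_mono) auto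
  ultimately show "card S \<le> r" by linarith
qed

lemma card_span_independent:
  fixes B :: "('a::{field,finite} ^ 'n::finite) set"
  assumes "vec.independent B"
  shows "card (vec.span B) = CARD('a) ^ card B"
proof -
  let ?comb = "\<lambda>u. \<Sum>v\<in>B. u v *s v"
  have "vec.span B = ?comb ` (B \<rightarrow>\<^sub>E UNIV)"
  proof
    show "vec.span B \<subseteq> ?comb ` (B \<rightarrow>\<^sub>E UNIV)"
    proof
      fix x assume "x \<in> vec.span B"
      then obtain u where "x = ?comb u" using vec.span_finite[of B] by auto
      also have "\<dots> = ?comb (restrict u B)" by (intro sum.cong) auto
      finally show "x \<in> ?comb ` (B \<rightarrow>\<^sub>E UNIV)" by (intro image_eqI[of _ _ "restrict u B"]) simp_all
    qed
    show "?comb ` (B \<rightarrow>\<^sub>E UNIV) \<subseteq> vec.span B"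
      using vec.span_finite[of B] by auto
  qed
  moreover have "inj_on ?comb (B \<rightarrow>\<^sub>E UNIV)"
  proof (rule inj_onI)
    fix u w assume u: "u \<in> B \<rightarrow>\<^sub>E UNIV" and w: "w \<in> B \<rightarrow>\<^sub>E UNIV" and "?comb u = ?comb w"
    then have "(\<Sum>v\<in>B. (u v - w v) *s v) = 0"
      by (simp add: vector_sub_rdistrib sum_subtractf)
    then have "\<forall>v\<in>B. u v - w v = 0"
      using assms unfolding vec.independent_explicit
      by (elim conjE allE[where x = "\<lambda>v. u v - w v"]) simp
    with u w show "u = w" by (auto simp: PiE_iff intro!: extensionalityI)
  qed
  ultimately have "card (vec.span B) = card (B \<rightarrow>\<^sub>E (UNIV :: 'a set))"
    by (simp add: card_image)
  then show ?thesis
    by (simp add: card_PiE)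
qed

lemma card_subspace:
  fixes S :: "('a::{field,finite} ^ 'n::finite) set"
  assumes "vec.subspace S"
  shows "card S = CARD('a) ^ vec.dim S"
proof -
  obtain B where "B \<subseteq> S" "vec.independent B" "S \<subseteq> vec.span B" "card B = vec.dim S"
    using vec.basis_exists by blast
  with assms have "vec.span B = S" by (metis vec.span_subspace)
  with \<open>vec.independent B\<close> \<open>card B = vec.dim S\<close> show ?thesis
    by (metis card_span_independent)
qed

lemma rk_le_of_independent_kernel:
  fixes \<iota> :: "'k::{field,finite} \<Rightarrow> 'b::field" and v :: "'b ^ 'n::finite"
  assumes emb: "field_emb \<iota>" and "vec.independent B" and "card B = CARD('n) - r"
    and "\<forall>b\<in>B. coord_comb \<iota> v b = 0"
  shows "rk \<iota> v \<le> r"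
proof (rule rk_le_of_card_kernel[OF emb])
  have "vec.subspace {a. coord_comb \<iota> v a = 0}"
    using subspace_coord_comb_preimage[OF emb, of "{0}"] by simp
  moreover have "B \<subseteq> {a. coord_comb \<iota> v a = 0}"
    using assms(4) by blast
  ultimately have "vec.span B \<subseteq> {a. coord_comb \<iota> v a = 0}"
    by (intro vec.span_minimal)
  then have "card (vec.span B) \<le> card {a. coord_comb \<iota> v a = 0}"
    by (rule card_mono[rotated]) simp
  with assms(2,3) show "CARD('k) ^ (CARD('n) - r) \<le> card {a. coord_comb \<iota> v a = 0}"
    by (simp add: card_span_independent)
qed

lemma interpolating_codeword_exists:
  fixes \<iota> :: "'k::{field,finite} \<Rightarrow> 'b::{field,finite}" and C :: "('b ^ 'n::finite) set"
  assumes emb: "field_emb \<iota>"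
    and card_C: "card C = CARD('b) ^ (CARD('n) - \<rho>)"
    and dist_C: "\<forall>x\<in>C. \<forall>y\<in>C. x \<noteq> y \<longrightarrow> \<rho> < rank_dist \<iota> x y"
    and indep_B: "vec.independent B" and card_B: "card B = CARD('n) - \<rho>"
  obtains c where "c \<in> C" and "\<And>b. b \<in> B \<Longrightarrow> coord_comb \<iota> c b = g b"
proof -
  let ?values = "\<lambda>c. restrict (coord_comb \<iota> c) B"
  have "c = c'" if "c \<in> C" "c' \<in> C" "?values c = ?values c'" for c c'
  proof (rule ccontr)
    assume "c \<noteq> c'"
    have "coord_comb \<iota> (c - c') b = 0" if "b \<in> B" for b
      using fun_cong[OF \<open>?values c = ?values c'\<close>, of b] that by (simp add: coord_comb_diff_vec)
    then have "rk \<iota> (c - c') \<le> \<rho>"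
      using rk_le_of_independent_kernel[OF emb indep_B card_B] by blast
    moreover have "\<rho> < rk \<iota> (c - c')"
      using dist_C \<open>c \<in> C\<close> \<open>c' \<in> C\<close> \<open>c \<noteq> c'\<close> unfolding rank_dist_def by blast
    ultimately show False by simp
  qed
  then have "inj_on ?values C" by (rule inj_onI)
  then have "card (?values ` C) = card (B \<rightarrow>\<^sub>E (UNIV :: 'b set))"
    by (simp add: card_image card_C card_B card_PiE)
  moreover have "?values ` C \<subseteq> B \<rightarrow>\<^sub>E UNIV" by auto
  ultimately have "?values ` C = B \<rightarrow>\<^sub>E UNIV"
    by (intro card_subset_eq) simp_all
  then have "restrict g B \<in> ?values ` C" by simp
  then obtain c where "c \<in> C" and "restrict g B = ?values c" by blast
  then show ?thesis
    using that[of c] by (metis restrict_apply')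
qed

lemma rank_cov_radius_attained:
  fixes \<iota> :: "'k::field \<Rightarrow> 'b::{field,finite}" and C :: "('b ^ 'n::finite) set"
  obtains x where "\<And>c. c \<in> C \<Longrightarrow> rank_cov_radius \<iota> C \<le> rank_dist \<iota> x c"
proof -
  let ?dist_C = "\<lambda>x. Min ((\<lambda>c. rank_dist \<iota> x c) ` C)"
  have "rank_cov_radius \<iota> C \<in> range ?dist_C"
    unfolding rank_cov_radius_def by (rule Max_in) simp_all
  then obtain x where x: "rank_cov_radius \<iota> C = ?dist_C x" by blast
  have "rank_cov_radius \<iota> C \<le> rank_dist \<iota> x c" if "c \<in> C" for c
    unfolding x by (rule Min_le) (simp_all add: that)
  then show ?thesis by (rule that)
qed

lemma rank_cov_radius_eqI:
  fixes \<iota> :: "'k::field \<Rightarrow> 'b::{field,finite}" and C :: "('b ^ 'n::finite) set"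
  assumes covered: "\<And>x. \<exists>c\<in>C. rank_dist \<iota> x c \<le> r"
    and far: "\<And>c. c \<in> C \<Longrightarrow> r \<le> rank_dist \<iota> x\<^sub>0 c"
  shows "rank_cov_radius \<iota> C = r"
proof -
  let ?dist_C = "\<lambda>x. Min ((\<lambda>c. rank_dist \<iota> x c) ` C)"
  have le: "?dist_C x \<le> r" for x
  proof -
    obtain c where "c \<in> C" and "rank_dist \<iota> x c \<le> r" using covered by blast
    moreover have "?dist_C x \<le> rank_dist \<iota> x c"
      by (rule Min_le) (simp_all add: \<open>c \<in> C\<close>)
    ultimately show ?thesis by linarith
  qed
  have "C \<noteq> {}" using covered[of x\<^sub>0] by blast
  then have "r \<le> ?dist_C x\<^sub>0"
    by (subst Min_ge_iff) (auto simp: far)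
  with le[of x\<^sub>0] have "r = ?dist_C x\<^sub>0" by linarith
  then have "r \<in> range ?dist_C" by (rule range_eqI)
  then show ?thesis
    unfolding rank_cov_radius_def using le by (intro Max_eqI) auto
qed

lemma inj_of_basis_to_independent:
  fixes f :: "'b::field \<Rightarrow> 'c::field"
  assumes emb1: "field_emb \<iota>1" and "Modules.additive f"
    and scale: "\<And>a x. f (\<iota>1 a * x) = \<iota>2 a * f x"
    and basis: "is_basis_over \<iota>1 \<beta> m" and indep: "lin_indep_over \<iota>2 \<alpha> {..<m}"
    and f_\<beta>: "\<And>i. i < m \<Longrightarrow> f (\<beta> i) = \<alpha> i"
  shows "inj f"
proof -
  interpret Modules.additive f by fact
  have kernel: "x = 0" if "f x = 0" for x
  proof -
    obtain c where x: "x = (\<Sum>i<m. \<iota>1 (c i) * \<beta> i)"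
      using basis unfolding is_basis_over_def by blast
    have "(\<Sum>i<m. \<iota>2 (c i) * \<alpha> i) = f x"
      unfolding x sum by (simp add: scale f_\<beta>)
    with \<open>f x = 0\<close> have "\<forall>i<m. c i = 0"
      using indep[unfolded lin_indep_over_def, THEN spec[of _ c]] by simp
    then show "x = 0"
      unfolding x by (simp add: field_emb_0[OF emb1])
  qed
  show ?thesis
  proof (rule injI)
    fix x y assume "f x = f y"
    then have "x - y = 0" by (intro kernel) (simp add: diff)
    then show "x = y" by simp
  qed
qed

locale lin_inj_over = Modules.additive f
  for f :: "'b::{field,finite} \<Rightarrow> 'c::{field,finite}" +
  fixes \<iota>1 :: "'k::{field,finite} \<Rightarrow> 'b" and \<iota>2 :: "'k \<Rightarrow> 'c"
  assumes field_emb1: "field_emb \<iota>1" and field_emb2: "field_emb \<iota>2"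
    and scale: "f (\<iota>1 a * x) = \<iota>2 a * f x"
    and inj: "inj f"
begin

lemma coord_comb_fbar: "coord_comb \<iota>2 (fbar f c) a = f (coord_comb \<iota>1 c a)"
  unfolding coord_comb_def fbar_def sum by (simp add: scale)

lemma fbar_diff: "fbar f (x - y) = fbar f x - fbar f y"
  by (simp add: fbar_def diff vec_eq_iff)

lemma inj_fbar: "inj (fbar f)"
  using inj by (auto intro!: injI simp: fbar_def vec_eq_iff inj_eq)

lemma rk_fbar: "rk \<iota>2 (fbar f z) = rk \<iota>1 z"
proof -
  have "(\<Sum>i\<in>S. \<iota>2 (c i) * fbar f z $ i) = f (\<Sum>i\<in>S. \<iota>1 (c i) * z $ i)" for S c
    by (simp add: fbar_def sum scale)
  moreover have "f w = 0 \<longleftrightarrow> w = 0" for w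
    using inj zero by (metis injD)
  ultimately have "lin_indep_over \<iota>2 (\<lambda>i. fbar f z $ i) S \<longleftrightarrow> lin_indep_over \<iota>1 (\<lambda>i. z $ i) S" for S
    unfolding lin_indep_over_def by simp
  then show ?thesis
    unfolding rk_def by simp
qed

lemma rank_dist_fbar: "rank_dist \<iota>2 (fbar f x) (fbar f y) = rank_dist \<iota>1 x y"
  by (simp add: rank_dist_def fbar_diff[symmetric] rk_fbar)

lemma subspace_coord_comb_in_range: "vec.subspace {a. coord_comb \<iota>2 x a \<in> range f}"
proof (rule subspace_coord_comb_preimage[OF field_emb2])
  show "0 \<in> range f" using zero by (metis rangeI)
  show "u + v \<in> range f" if "u \<in> range f" "v \<in> range f" for u v
    using that by (auto simp: add[symmetric])
  show "\<iota>2 s * u \<in> range f" if "u \<in> range f" for s u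
    using that by (auto simp: scale[symmetric])
qed

lemma card_coord_comb_in_range:
  "CARD('k) ^ CARD('n) * CARD('b) \<le> CARD('c) * card {a :: 'k ^ 'n::finite. coord_comb \<iota>2 x a \<in> range f}"
proof -
  let ?P = "\<lambda>(a :: 'k ^ 'n, y). coord_comb \<iota>2 x a + f y"
  let ?K = "{a. coord_comb \<iota>2 x a \<in> range f}"
  have P: "Modules.additive ?P"
    by unfold_locales
      (auto simp: additive.add[OF additive_coord_comb[OF field_emb2]] add algebra_simps)
  have "inj_on fst {p. ?P p = 0}"
    by (auto intro!: inj_onI injD[OF inj] simp: add_eq_0_iff)
  then have "card {p. ?P p = 0} = card (fst ` {p. ?P p = 0})"
    by (rule card_image[symmetric])
  also have "\<dots> \<le> card ?K"
  proof (rule card_mono)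
    show "fst ` {p. ?P p = 0} \<subseteq> ?K"
    proof clarsimp
      fix a y assume "coord_comb \<iota>2 x a + f y = 0"
      then have "coord_comb \<iota>2 x a = f (- y)" by (simp add: minus add_eq_0_iff2)
      then show "coord_comb \<iota>2 x a \<in> range f" by simp
    qed
  qed simp
  finally have "card {p. ?P p = 0} \<le> card ?K" .
  with card_mono[of UNIV "range ?P"]
  have "card (range ?P) * card {p. ?P p = 0} \<le> CARD('c) * card ?K"
    by (intro mult_le_mono) simp_all
  moreover have "CARD(('k ^ 'n) \<times> 'b) = CARD('k) ^ CARD('n) * CARD('b)"
    using card_cartesian_product[of "UNIV :: ('k ^ 'n) set" "UNIV :: 'b set"] by simp
  ultimately show ?thesis
    by (simp only: card_range_mult_card_kernel[OF P])
qed

lemma independent_coord_combs_in_range_exist: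
  assumes card_c: "CARD('c) = CARD('b) * CARD('k) ^ \<rho>"
  obtains B :: "('k ^ 'n::finite) set"
  where "vec.independent B" and "card B = CARD('n) - \<rho>"
    and "B \<subseteq> {a. coord_comb \<iota>2 x a \<in> range f}"
proof -
  let ?K = "{a :: 'k ^ 'n. coord_comb \<iota>2 x a \<in> range f}"
  have "CARD('b) * CARD('k) ^ CARD('n) \<le> CARD('b) * (CARD('k) ^ \<rho> * CARD('k) ^ vec.dim ?K)"
    using card_coord_comb_in_range[of x]
    unfolding card_c card_subspace[OF subspace_coord_comb_in_range] by (simp only: ac_simps)
  then have "CARD('k) ^ CARD('n) \<le> CARD('k) ^ (\<rho> + vec.dim ?K)"
    unfolding power_add by simp
  then have "CARD('n) \<le> \<rho> + vec.dim ?K"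
    by (rule power_le_imp_le_exp[OF one_less_card])
  then have "CARD('n) - \<rho> \<le> vec.dim ?K"
    by linarith
  obtain BK where "BK \<subseteq> ?K" "vec.independent BK" "?K \<subseteq> vec.span BK" "card BK = vec.dim ?K"
    by (rule vec.basis_exists)
  with \<open>CARD('n) - \<rho> \<le> vec.dim ?K\<close> obtain B where "B \<subseteq> BK" "card B = CARD('n) - \<rho>"
    by (metis obtain_subset_with_card_n)
  show ?thesis
  proof (rule that)
    show "vec.independent B" using \<open>vec.independent BK\<close> \<open>B \<subseteq> BK\<close> by (rule vec.independent_mono)
    show "B \<subseteq> ?K" using \<open>B \<subseteq> BK\<close> \<open>BK \<subseteq> ?K\<close> by (rule order_trans)
  qed fact
qed

lemma fbar_code_covers:
  fixes C :: "('b ^ 'n::finite) set"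
  assumes card_c: "CARD('c) = CARD('b) * CARD('k) ^ \<rho>"
    and card_C: "card C = CARD('b) ^ (CARD('n) - \<rho>)"
    and dist_C: "\<forall>x\<in>C. \<forall>y\<in>C. x \<noteq> y \<longrightarrow> \<rho> < rank_dist \<iota>1 x y"
  shows "\<exists>c\<in>C. rank_dist \<iota>2 x (fbar f c) \<le> \<rho>"
proof -
  obtain B where indep_B: "vec.independent B" and card_B: "card B = CARD('n) - \<rho>"
    and B_lift: "B \<subseteq> {a. coord_comb \<iota>2 x a \<in> range f}"
    using independent_coord_combs_in_range_exist[OF card_c] .
  obtain c where "c \<in> C" and c: "\<And>b. b \<in> B \<Longrightarrow> coord_comb \<iota>1 c b = inv f (coord_comb \<iota>2 x b)"
    using interpolating_codeword_exists[OF field_emb1 card_C dist_C indep_B card_B,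
        where g = "\<lambda>b. inv f (coord_comb \<iota>2 x b)"] by blast
  have "coord_comb \<iota>2 (x - fbar f c) b = 0" if "b \<in> B" for b
  proof -
    from that B_lift have "coord_comb \<iota>2 x b \<in> range f" by blast
    then have "f (coord_comb \<iota>1 c b) = coord_comb \<iota>2 x b"
      by (simp add: c[OF that] f_inv_into_f)
    then show ?thesis
      by (simp add: coord_comb_diff_vec coord_comb_fbar)
  qed
  then have "rk \<iota>2 (x - fbar f c) \<le> \<rho>"
    using rk_le_of_independent_kernel[OF field_emb2 indep_B card_B] by blast
  with \<open>c \<in> C\<close> show ?thesis
    unfolding rank_dist_def by blast
qed

end

theorem proposition9:
  fixes q m \<rho> :: nat
    and \<iota>1 :: "'k::{field,finite} \<Rightarrow> 'b::{field,finite}"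
    and \<iota>2 :: "'k \<Rightarrow> 'c::{field,finite}"
    and \<alpha> :: "nat \<Rightarrow> 'c" and \<beta> :: "nat \<Rightarrow> 'b"
    and f :: "'b \<Rightarrow> 'c"
    and C :: "('b ^ 'n::finite) set"
  assumes "CARD('k) = q"
    and "CARD('b) = q ^ m"
    and "CARD('c) = q ^ (m + \<rho>)"
    and "field_emb \<iota>1" and "field_emb \<iota>2"
    and "is_basis_over \<iota>2 \<alpha> (m + \<rho>)"
    and "is_basis_over \<iota>1 \<beta> m"
    and "\<forall>x y. f (x + y) = f x + f y"
    and "\<forall>a x. f (\<iota>1 a * x) = \<iota>2 a * f x"
    and "\<forall>i<m. f (\<beta> i) = \<alpha> i"
    and "CARD('n) \<le> m"
    and "vec.subspace C"
    and "vec.dim C = CARD('n) - \<rho>"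
    and "has_min_rank_dist \<iota>1 C (\<rho> + 1)"
    and "rank_cov_radius \<iota>1 C = \<rho>"
  shows "card (fbar f ` C) = q ^ (m * (CARD('n) - \<rho>))
    \<and> rank_cov_radius \<iota>2 (fbar f ` C) = \<rho>"
proof -
  have additive: "Modules.additive f"
    by unfold_locales (rule \<open>\<forall>x y. f (x + y) = f x + f y\<close>[rule_format])
  note scale = \<open>\<forall>a x. f (\<iota>1 a * x) = \<iota>2 a * f x\<close>[rule_format]
  have "lin_indep_over \<iota>2 \<alpha> {..<m}"
    using \<open>is_basis_over \<iota>2 \<alpha> (m + \<rho>)\<close> unfolding is_basis_over_def
    by (elim conjE lin_indep_over_subset[OF \<open>field_emb \<iota>2\<close>]) auto
  then have "inj f"
    using inj_of_basis_to_independent[OF \<open>field_emb \<iota>1\<close> additive scale \<open>is_basis_over \<iota>1 \<beta> m\<close>]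
      \<open>\<forall>i<m. f (\<beta> i) = \<alpha> i\<close> by blast
  then interpret lin_inj_over f \<iota>1 \<iota>2
    by (intro lin_inj_over.intro lin_inj_over_axioms.intro additive scale \<open>field_emb \<iota>1\<close> \<open>field_emb \<iota>2\<close>)
  have card_C: "card C = CARD('b) ^ (CARD('n) - \<rho>)"
    using card_subspace[OF \<open>vec.subspace C\<close>] \<open>vec.dim C = CARD('n) - \<rho>\<close> by simp
  have card_c: "CARD('c) = CARD('b) * CARD('k) ^ \<rho>"
    using assms(1-3) by (simp add: power_add)
  have dist_C: "\<forall>x\<in>C. \<forall>y\<in>C. x \<noteq> y \<longrightarrow> \<rho> < rank_dist \<iota>1 x y"
    using \<open>has_min_rank_dist \<iota>1 C (\<rho> + 1)\<close> unfolding has_min_rank_dist_def by (auto simp: Suc_le_eq)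
  obtain y where y: "\<And>c. c \<in> C \<Longrightarrow> \<rho> \<le> rank_dist \<iota>1 y c"
    by (rule rank_cov_radius_attained[where \<iota> = \<iota>1 and C = C,
          unfolded \<open>rank_cov_radius \<iota>1 C = \<rho>\<close>]) blast
  have "rank_cov_radius \<iota>2 (fbar f ` C) = \<rho>"
  proof (rule rank_cov_radius_eqI[where x\<^sub>0 = "fbar f y"])
    show "\<exists>c\<in>fbar f ` C. rank_dist \<iota>2 x c \<le> \<rho>" for x
      using fbar_code_covers[OF card_c card_C dist_C, of x] by blast
    show "\<rho> \<le> rank_dist \<iota>2 (fbar f y) c" if "c \<in> fbar f ` C" for c
      using that y by (auto simp: rank_dist_fbar)
  qed
  moreover have "card (fbar f ` C) = card C"
    by (rule card_image[OF inj_on_subset[OF inj_fbar subset_UNIV]])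
  ultimately show ?thesis
    using card_C assms(1,2) by (simp add: power_mult)
qed

end
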